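(* The edge set of the complete 4-partite graph $K_{4,4,4,4}$ can be partitioned into 2 subgraphs, each isomorphic to the Shrikhande graph.
   Context: The Shrikhande graph is the Cayley graph on the group $\mathbb{Z}_4 \times \mathbb{Z}_4$ with connection set $\{\pm(1,0), \pm(0,1), \pm(1,1)\}$. It is a 6-regular graph on 16 vertices with 48 edges. $K_{4,4,4,4}$ is the complete multipartite graph with four parts, each of size 4. *)

theory Defs
  imports Main
begin

text \<open>Simple graphs are represented by a vertex set V and an edge set E,
  where each edge is a 2-element subset of V.\<close>

definition graph_iso :: "'a set \<Rightarrow> 'a set set \<Rightarrow> 'b set \<Rightarrow> 'b set set \<Rightarrow> bool" where
  "graph_iso V E W F \<longleftrightarrow>
     (\<exists>f. bij_betw f V W \<and> (\<forall>u\<in>V. \<forall>v\<in>V. {u, v} \<in> E \<longleftrightarrow> {f u, f v} \<in> F))"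

definition Z4Z4 :: "(int \<times> int) set" where
  "Z4Z4 = {0..<4} \<times> {0..<4}"

definition shrikhande_edges :: "(int \<times> int) set set" where
  "shrikhande_edges = {{u, v} | u v. u \<in> Z4Z4 \<and> v \<in> Z4Z4 \<and>
      ((fst u - fst v) mod 4, (snd u - snd v) mod 4) \<in> {(1,0), (3,0), (0,1), (0,3), (1,1), (3,3)}}"

text \<open>Complete 4-partite graph K_{4,4,4,4}: vertices (part, index) with
  part, index in {0..3}; two vertices adjacent iff in different parts.\<close>
definition K4444_verts :: "(nat \<times> nat) set" where
  "K4444_verts = {0..<4} \<times> {0..<4}"

definition K4444_edges :: "(nat \<times> nat) set set" where
  "K4444_edges = {{u, v} | u v. u \<in> K4444_verts \<and> v \<in> K4444_verts \<and> fst u \<noteq> fst v}"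

end

theory Submission
  imports Defs
begin

text \<open>Relabel the vertices of \<open>K\<^sub>4\<^sub>,\<^sub>4\<^sub>,\<^sub>4\<^sub>,\<^sub>4\<close> by \<open>\<int>\<^sub>4 \<times> \<int>\<^sub>4\<close> so that its parts become the cosets of
  \<open>H = 2(\<int>\<^sub>4 \<times> \<int>\<^sub>4)\<close>; it is then the Cayley graph with connection set \<open>(\<int>\<^sub>4 \<times> \<int>\<^sub>4) - H\<close>.
  The Shrikhande connection set \<open>S\<close> avoids \<open>H\<close>, and so does its image \<open>T\<close> under the group
  automorphism \<open>(x, y) \<mapsto> (x + y, 3x + 2y)\<close>; moreover \<open>S\<close> and \<open>T\<close> are disjoint, symmetric and
  together exhaust \<open>(\<int>\<^sub>4 \<times> \<int>\<^sub>4) - H\<close>. So the Cayley graphs of \<open>S\<close> and \<open>T\<close> partition the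
  edges of \<open>K\<^sub>4\<^sub>,\<^sub>4\<^sub>,\<^sub>4\<^sub>,\<^sub>4\<close>, and the automorphism is an isomorphism between them.\<close>

lemma mod_lincomb_mod: "(a * (x mod m) + b * (y mod m)) mod m = (a * x + b * y) mod (m :: int)"
  by (simp only: mod_add_eq[symmetric, of "a * _"] mod_mult_right_eq)

lemma mod2_bit: "(x :: int) mod 2 \<in> {0, 1}"
  by auto

lemma double_add_bit_eq_iff:
  fixes a c :: int
  assumes "b \<in> {0, 1}" and "d \<in> {0, 1}"
  shows "2 * a + b = 2 * c + d \<longleftrightarrow> a = c \<and> b = d"
  using assms by auto presburger+

definition edges_of :: "'a set \<Rightarrow> ('a \<Rightarrow> 'a \<Rightarrow> bool) \<Rightarrow> 'a set set" where
  "edges_of V R = {{u, v} | u v. u \<in> V \<and> v \<in> V \<and> R u v}"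

lemma edges_of_subset_Pow: "edges_of V R \<subseteq> Pow V"
  unfolding edges_of_def by blast

lemma edges_of_disj_eq_Un: "edges_of V (\<lambda>u v. R u v \<or> Q u v) = edges_of V R \<union> edges_of V Q"
  unfolding edges_of_def by blast

lemma edges_of_disjoint:
  assumes "symp_on V Q" and "\<And>u v. u \<in> V \<Longrightarrow> v \<in> V \<Longrightarrow> R u v \<Longrightarrow> \<not> Q u v"
  shows "edges_of V R \<inter> edges_of V Q = {}"
proof (rule equals0I)
  fix e assume "e \<in> edges_of V R \<inter> edges_of V Q"
  then obtain u v x y where uv: "e = {u, v}" "u \<in> V" "v \<in> V" "R u v"
    and xy: "e = {x, y}" "Q x y"
    unfolding edges_of_def by blast
  have "\<not> Q u v" "\<not> Q v u"
    using assms(2)[OF uv(2-4)] symp_onD[OF assms(1) uv(3,2)] by blast+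
  moreover have "x = u \<and> y = v \<or> x = v \<and> y = u"
    using uv(1) xy(1) doubleton_eq_iff[of x y u v] by simp
  then have "Q u v \<or> Q v u"
    using xy(2) by blast
  ultimately show False by blast
qed

lemma image_edges_of:
  assumes f: "bij_betw f V W" and RQ: "\<And>u v. u \<in> V \<Longrightarrow> v \<in> V \<Longrightarrow> Q (f u) (f v) \<longleftrightarrow> R u v"
  shows "image f ` edges_of V R = edges_of W Q"
proof
  show "image f ` edges_of V R \<subseteq> edges_of W Q"
  proof
    fix e assume "e \<in> image f ` edges_of V R"
    then obtain u v where e: "e = {f u, f v}" "u \<in> V" "v \<in> V" "R u v"
      unfolding edges_of_def by auto
    then have "f u \<in> W" "f v \<in> W" "Q (f u) (f v)"
      using RQ bij_betwE[OF f] by auto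
    with e(1) show "e \<in> edges_of W Q"
      unfolding edges_of_def by blast
  qed
next
  show "edges_of W Q \<subseteq> image f ` edges_of V R"
  proof
    fix e assume "e \<in> edges_of W Q"
    then obtain x y where e: "e = {x, y}" "x \<in> W" "y \<in> W" "Q x y"
      unfolding edges_of_def by blast
    then obtain u v where uv: "u \<in> V" "v \<in> V" "x = f u" "y = f v"
      using bij_betw_imp_surj_on[OF f] by blast
    with e RQ have "{u, v} \<in> edges_of V R"
      unfolding edges_of_def by blast
    moreover have "e = f ` {u, v}"
      using e(1) uv(3,4) by simp
    ultimately show "e \<in> image f ` edges_of V R" by blast
  qed
qed

lemma graph_iso_image:
  assumes "bij_betw f V W" and "E \<subseteq> Pow V"
  shows "graph_iso V E W (image f ` E)"
  unfolding graph_iso_def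
proof (intro exI conjI ballI)
  show "bij_betw f V W" by fact
  fix u v assume "u \<in> V" "v \<in> V"
  then have "{u, v} \<in> Pow V" by simp
  then have "f ` {u, v} \<in> image f ` E \<longleftrightarrow> {u, v} \<in> E"
    using inj_on_image_mem_iff[OF inj_on_image_Pow[OF bij_betw_imp_inj_on[OF assms(1)]] _ assms(2)]
    by blast
  then show "{u, v} \<in> E \<longleftrightarrow> {f u, f v} \<in> image f ` E" by simp
qed

definition diff4 :: "int \<times> int \<Rightarrow> int \<times> int \<Rightarrow> int \<times> int" where
  "diff4 u v = ((fst u - fst v) mod 4, (snd u - snd v) mod 4)"

definition neg4 :: "int \<times> int \<Rightarrow> int \<times> int" where
  "neg4 d = ((- fst d) mod 4, (- snd d) mod 4)"

definition z4_cayley :: "(int \<times> int) set \<Rightarrow> (int \<times> int) set set" where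
  "z4_cayley D = edges_of Z4Z4 (\<lambda>u v. diff4 u v \<in> D)"

definition shrikhande_conn :: "(int \<times> int) set" where
  "shrikhande_conn = {(1, 0), (3, 0), (0, 1), (0, 3), (1, 1), (3, 3)}"

definition co_shrikhande_conn :: "(int \<times> int) set" where
  "co_shrikhande_conn = {(1, 3), (3, 1), (1, 2), (3, 2), (2, 1), (2, 3)}"

definition twist :: "int \<times> int \<Rightarrow> int \<times> int" where
  "twist u = ((fst u + snd u) mod 4, (3 * fst u + 2 * snd u) mod 4)"

text \<open>The part of \<open>u\<close> records the coset of \<open>u\<close> modulo \<open>2(\<int>\<^sub>4 \<times> \<int>\<^sub>4)\<close>, i.e. its two parities.\<close>

definition to_K4444 :: "int \<times> int \<Rightarrow> nat \<times> nat" where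
  "to_K4444 u = (nat (2 * (fst u mod 2) + snd u mod 2), nat (2 * (fst u div 2) + snd u div 2))"

lemma Z4Z4_eq: "Z4Z4 = {0, 1, 2, 3} \<times> {0, 1, 2, 3}"
proof -
  have "x \<in> {0..<4} \<longleftrightarrow> x \<in> {0, 1, 2, 3 :: int}" for x by auto
  then show ?thesis unfolding Z4Z4_def by blast
qed

lemma K4444_verts_eq: "K4444_verts = {0, 1, 2, 3} \<times> {0, 1, 2, 3}"
  unfolding K4444_verts_def by (auto simp: atLeast0LessThan lessThan_Suc numeral_eq_Suc)

lemma ball_Z4Z4: "(\<forall>d\<in>Z4Z4. P d) \<longleftrightarrow> (\<forall>a\<in>{0, 1, 2, 3}. \<forall>b\<in>{0, 1, 2, 3}. P (a, b))"
  by (simp add: Z4Z4_eq)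

lemma shrikhande_edges_eq: "shrikhande_edges = z4_cayley shrikhande_conn"
  unfolding shrikhande_edges_def z4_cayley_def edges_of_def diff4_def shrikhande_conn_def ..

lemma diff4_in_Z4Z4: "diff4 u v \<in> Z4Z4"
  by (simp add: diff4_def Z4Z4_def)

lemma Z4Z4_mod4: "u \<in> Z4Z4 \<Longrightarrow> (fst u mod 4, snd u mod 4) = u"
  unfolding Z4Z4_def by (cases u) simp

lemma diff4_eq_0_iff: "u \<in> Z4Z4 \<Longrightarrow> v \<in> Z4Z4 \<Longrightarrow> diff4 u v = (0, 0) \<longleftrightarrow> u = v"
  using Z4Z4_mod4[of u] Z4Z4_mod4[of v]
  by (auto simp: diff4_def prod_eq_iff dvd_eq_mod_eq_0[symmetric] mod_eq_dvd_iff[symmetric])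

lemma diff4_swap: "diff4 v u = neg4 (diff4 u v)"
  by (simp add: diff4_def neg4_def mod_minus_eq)

lemma z4_cayley_Un: "z4_cayley (C \<union> D) = z4_cayley C \<union> z4_cayley D"
  unfolding z4_cayley_def Un_iff by (rule edges_of_disj_eq_Un)

lemma z4_cayley_disjoint:
  assumes "C \<inter> D = {}" and "neg4 ` D \<subseteq> D"
  shows "z4_cayley C \<inter> z4_cayley D = {}"
  unfolding z4_cayley_def
proof (rule edges_of_disjoint)
  show "symp_on Z4Z4 (\<lambda>u v. diff4 u v \<in> D)"
  proof (rule symp_onI)
    fix u v assume "diff4 u v \<in> D"
    then show "diff4 v u \<in> D"
      unfolding diff4_swap[of v u] using assms(2) by blast
  qed
qed (use assms(1) in blast)

lemma diff4_twist: "diff4 (twist u) (twist v) = twist (diff4 u v)"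
  unfolding diff4_def twist_def by (simp add: mod_simps mod_lincomb_mod, simp add: algebra_simps)

lemma twist_in_Z4Z4: "twist u \<in> Z4Z4"
  by (simp add: twist_def Z4Z4_def)

lemma twist_eq_0_imp: "\<forall>d\<in>Z4Z4. twist d = (0, 0) \<longrightarrow> d = (0, 0)"
  unfolding ball_Z4Z4 by (simp add: twist_def)

lemma bij_betw_twist: "bij_betw twist Z4Z4 Z4Z4"
proof -
  have "inj_on twist Z4Z4"
  proof (rule inj_onI)
    fix u v assume uv: "u \<in> Z4Z4" "v \<in> Z4Z4" "twist u = twist v"
    have "twist (diff4 u v) = diff4 (twist u) (twist v)"
      by (rule diff4_twist[symmetric])
    also have "\<dots> = (0, 0)"
      using uv(3) diff4_eq_0_iff[OF twist_in_Z4Z4 twist_in_Z4Z4] by simp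
    finally have "diff4 u v = (0, 0)"
      using twist_eq_0_imp diff4_in_Z4Z4 by blast
    then show "u = v"
      using diff4_eq_0_iff[OF uv(1,2)] by blast
  qed
  moreover have "twist ` Z4Z4 \<subseteq> Z4Z4"
    using twist_in_Z4Z4 by blast
  ultimately show ?thesis
    unfolding bij_betw_def by (simp add: endo_inj_surj Z4Z4_def)
qed

lemma twist_mem_co_shrikhande_conn_iff: "\<forall>d\<in>Z4Z4. twist d \<in> co_shrikhande_conn \<longleftrightarrow> d \<in> shrikhande_conn"
  unfolding ball_Z4Z4 by (simp add: twist_def shrikhande_conn_def co_shrikhande_conn_def)

lemma image_twist_z4_cayley:
  "image twist ` z4_cayley shrikhande_conn = z4_cayley co_shrikhande_conn"
  unfolding z4_cayley_def
  by (rule image_edges_of[OF bij_betw_twist]) (simp add: diff4_twist twist_mem_co_shrikhande_conn_iff diff4_in_Z4Z4)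

lemma shrikhande_conn_disjoint: "shrikhande_conn \<inter> co_shrikhande_conn = {}"
  by (simp add: shrikhande_conn_def co_shrikhande_conn_def)

lemma neg4_co_shrikhande_conn: "neg4 ` co_shrikhande_conn \<subseteq> co_shrikhande_conn"
  by (simp add: neg4_def co_shrikhande_conn_def)

lemma bij_betw_to_K4444: "bij_betw to_K4444 Z4Z4 K4444_verts"
proof -
  have inj: "inj_on to_K4444 Z4Z4"
    unfolding inj_on_def ball_Z4Z4 by (simp add: to_K4444_def)
  moreover have "to_K4444 ` Z4Z4 \<subseteq> K4444_verts"
    unfolding image_subset_iff ball_Z4Z4 by (simp add: K4444_verts_eq to_K4444_def)
  moreover have "card (to_K4444 ` Z4Z4) = card K4444_verts"
    unfolding card_image[OF inj] by (simp add: Z4Z4_def K4444_verts_def card_cartesian_product)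
  ultimately show ?thesis
    unfolding bij_betw_def by (simp add: card_subset_eq K4444_verts_def)
qed

lemma to_K4444_same_part:
  "fst (to_K4444 u) = fst (to_K4444 v) \<longleftrightarrow> fst u mod 2 = fst v mod 2 \<and> snd u mod 2 = snd v mod 2"
  unfolding to_K4444_def fst_conv
  by (simp add: eq_nat_nat_iff) (rule double_add_bit_eq_iff[OF mod2_bit mod2_bit])

lemma diff4_even_iff:
  "even (fst (diff4 u v)) \<and> even (snd (diff4 u v)) \<longleftrightarrow> fst u mod 2 = fst v mod 2 \<and> snd u mod 2 = snd v mod 2"
  by (simp add: diff4_def dvd_mod_iff mod_eq_dvd_iff)

lemma mem_shrikhande_conn_Un_co_iff:
  "\<forall>d\<in>Z4Z4. d \<in> shrikhande_conn \<union> co_shrikhande_conn \<longleftrightarrow> \<not> (even (fst d) \<and> even (snd d))"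
  unfolding ball_Z4Z4 by (simp add: shrikhande_conn_def co_shrikhande_conn_def)

lemma K4444_edges_eq:
  "K4444_edges = image to_K4444 ` z4_cayley (shrikhande_conn \<union> co_shrikhande_conn)"
proof -
  have "K4444_edges = edges_of K4444_verts (\<lambda>x y. fst x \<noteq> fst y)"
    unfolding K4444_edges_def edges_of_def ..
  also have "\<dots> = image to_K4444 ` z4_cayley (shrikhande_conn \<union> co_shrikhande_conn)"
    unfolding z4_cayley_def
  proof (rule image_edges_of[OF bij_betw_to_K4444, symmetric])
    fix u v
    have "diff4 u v \<in> shrikhande_conn \<union> co_shrikhande_conn \<longleftrightarrow>
        \<not> (even (fst (diff4 u v)) \<and> even (snd (diff4 u v)))"
      using mem_shrikhande_conn_Un_co_iff diff4_in_Z4Z4 by blast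
    then show "fst (to_K4444 u) \<noteq> fst (to_K4444 v) \<longleftrightarrow> diff4 u v \<in> shrikhande_conn \<union> co_shrikhande_conn"
      unfolding diff4_even_iff to_K4444_same_part by blast
  qed
  finally show ?thesis .
qed

theorem lemma2p2:
  shows "\<exists>E1 E2. E1 \<union> E2 = K4444_edges \<and> E1 \<inter> E2 = {} \<and>
           graph_iso Z4Z4 shrikhande_edges K4444_verts E1 \<and>
           graph_iso Z4Z4 shrikhande_edges K4444_verts E2"
proof (intro exI conjI)
  let ?S = "z4_cayley shrikhande_conn" and ?T = "z4_cayley co_shrikhande_conn"
  have sub: "?S \<subseteq> Pow Z4Z4" "?T \<subseteq> Pow Z4Z4"
    unfolding z4_cayley_def by (rule edges_of_subset_Pow)+
  show "image to_K4444 ` ?S \<union> image to_K4444 ` ?T = K4444_edges"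
    by (simp add: K4444_edges_eq z4_cayley_Un image_Un)
  show "image to_K4444 ` ?S \<inter> image to_K4444 ` ?T = {}"
    using inj_on_image_Int[OF inj_on_image_Pow[OF bij_betw_imp_inj_on[OF bij_betw_to_K4444]] sub]
      z4_cayley_disjoint[OF shrikhande_conn_disjoint neg4_co_shrikhande_conn]
    by simp
  show "graph_iso Z4Z4 shrikhande_edges K4444_verts (image to_K4444 ` ?S)"
    unfolding shrikhande_edges_eq by (rule graph_iso_image[OF bij_betw_to_K4444 sub(1)])
  have "image to_K4444 ` ?T = image (to_K4444 \<circ> twist) ` ?S"
    unfolding image_twist_z4_cayley[symmetric] image_comp by (simp add: image_image)
  then show "graph_iso Z4Z4 shrikhande_edges K4444_verts (image to_K4444 ` ?T)"
    unfolding shrikhande_edges_eq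
    using graph_iso_image[OF bij_betw_trans[OF bij_betw_twist bij_betw_to_K4444] sub(1)] by simp
qed

end
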